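(* Let $k\ge 2$ be an even integer. In the maximum-cardinality online bipartite matching problem under vertex arrivals with a hard budget of $k$ reassignments per arrival (defined in the context), the shortest-augmenting-path algorithm described in the context is $(1-\frac{2}{k+2})$-competitive: on every instance, the matching it outputs has cardinality at least $(1-\frac{2}{k+2})\cdot\mathsf{OPT}$, where $\mathsf{OPT}$ is the maximum cardinality of a matching in the revealed graph.
   Context: Problem: There is a bipartite graph $G=(L\cup R,E)$. The algorithm initially knows only $R$ and the budget $k$. Over $|L|$ timesteps, the vertices of $L$ arrive one at a time; when a vertex arrives, all its incident edges are revealed. At the end of each timestep the algorithm must output a matching in the graph revealed so far. The new matching $M_2$ must be obtainable from the previous matching $M_1$ (the empty matching before the first timestep) by at most $k$ (re)assignments, where the number of (re)assignments is the number of vertices having nonzero degree in $M_1\triangle M_2$ (each vertex whose partner changes counts once). Moreover, once a vertex is matched it must remain matched at all later timesteps. A matching's size is its number of edges. Given a matching $M$, a vertex is exposed if no edge of $M$ is incident to it; an augmenting path with respect to $M$ is a path between two distinct exposed vertices whose edges alternate between edges not in $M$ and edges in $M$; its length is its number of edges. Algorithm: when a vertex $u$ arrives, among all augmenting paths in the current graph with respect to the current matching $M$ that contain $u$, choose a shortest one $P$; if no such path exists or its length exceeds $k-1$, keep $M$; otherwise output $M\triangle P$. *)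

theory Defs
  imports Complex_Main
begin

text \<open>Graphs are sets of undirected edges, each edge a two-element set of vertices.\<close>

definition is_matching :: "'a set set \<Rightarrow> 'a set set \<Rightarrow> bool" where
  "is_matching G M \<longleftrightarrow> M \<subseteq> G \<and> (\<forall>e1\<in>M. \<forall>e2\<in>M. e1 \<noteq> e2 \<longrightarrow> e1 \<inter> e2 = {})"

definition exposed :: "'a set set \<Rightarrow> 'a \<Rightarrow> bool" where
  "exposed M v \<longleftrightarrow> (\<forall>e\<in>M. v \<notin> e)"

definition path_edge :: "'a list \<Rightarrow> nat \<Rightarrow> 'a set" where
  "path_edge ps i = {ps ! i, ps ! Suc i}"

definition path_edges :: "'a list \<Rightarrow> 'a set set" where
  "path_edges ps = {path_edge ps i | i. Suc i < length ps}"

definition is_path :: "'a set set \<Rightarrow> 'a list \<Rightarrow> bool" where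
  "is_path G ps \<longleftrightarrow> ps \<noteq> [] \<and> distinct ps \<and> (\<forall>i. Suc i < length ps \<longrightarrow> path_edge ps i \<in> G)"

definition path_length :: "'a list \<Rightarrow> nat" where
  "path_length ps = length ps - 1"

definition augmenting_path :: "'a set set \<Rightarrow> 'a set set \<Rightarrow> 'a list \<Rightarrow> bool" where
  "augmenting_path G M ps \<longleftrightarrow>
     is_path G ps \<and> length ps \<ge> 2 \<and> hd ps \<noteq> last ps \<and>
     exposed M (hd ps) \<and> exposed M (last ps) \<and>
     (\<forall>i. Suc (Suc i) < length ps \<longrightarrow>
        (path_edge ps i \<in> M \<longleftrightarrow> path_edge ps (Suc i) \<notin> M))"

definition symdiff :: "'b set \<Rightarrow> 'b set \<Rightarrow> 'b set" where
  "symdiff A B = (A - B) \<union> (B - A)"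

text \<open>One step of the shortest-augmenting-path algorithm, on the revealed graph G,
  when vertex u arrives, with budget k (nondeterministic choice among shortest paths).\<close>

definition alg_step :: "nat \<Rightarrow> 'a set set \<Rightarrow> 'a \<Rightarrow> 'a set set \<Rightarrow> 'a set set \<Rightarrow> bool" where
  "alg_step k G u M M' \<longleftrightarrow>
     ((\<not> (\<exists>P. augmenting_path G M P \<and> u \<in> set P \<and> path_length P \<le> k - 1)) \<and> M' = M)
   \<or> (\<exists>P. augmenting_path G M P \<and> u \<in> set P \<and>
          (\<forall>Q. augmenting_path G M Q \<and> u \<in> set Q \<longrightarrow> path_length P \<le> path_length Q) \<and>
          path_length P \<le> k - 1 \<and> M' = symdiff M (path_edges P))"

text \<open>Bipartite instance: arrival order Ls of the vertices of L, offline side R, edge set E.\<close>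

definition bip_instance :: "'a list \<Rightarrow> 'a set \<Rightarrow> 'a set set \<Rightarrow> bool" where
  "bip_instance Ls R E \<longleftrightarrow> distinct Ls \<and> finite R \<and> set Ls \<inter> R = {} \<and>
     (\<forall>e\<in>E. \<exists>l r. e = {l, r} \<and> l \<in> set Ls \<and> r \<in> R)"

definition revealed :: "'a list \<Rightarrow> 'a set set \<Rightarrow> nat \<Rightarrow> 'a set set" where
  "revealed Ls E t = {e \<in> E. \<exists>l \<in> set (take t Ls). l \<in> e}"

definition alg_run :: "nat \<Rightarrow> 'a list \<Rightarrow> 'a set set \<Rightarrow> (nat \<Rightarrow> 'a set set) \<Rightarrow> bool" where
  "alg_run k Ls E Ms \<longleftrightarrow> Ms 0 = {} \<and>
     (\<forall>i < length Ls. alg_step k (revealed Ls E (Suc i)) (Ls ! i) (Ms i) (Ms (Suc i)))"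

definition OPT :: "'a set set \<Rightarrow> nat" where
  "OPT G = Max {card M | M. is_matching G M}"

end

(*
  Invariant: after every arrival the matching M of the algorithm has no augmenting path of
  length < k.  Augmenting along a shortest augmenting path P through the arriving vertex u,
  with |P| < k, preserves it: if M \<triangle> P had an augmenting path Q with |Q| < k, then
  M \<triangle> (M \<triangle> P \<triangle> Q) = P \<triangle> Q would contain two vertex-disjoint augmenting paths of M.
  At most one of them passes through u, so one is an old path of length \<ge> k and the other
  has length \<ge> |P|, contradicting |P| + |Q| < |P| + k.

  Given the invariant, let N be a maximum matching.  One can peel |N| - |M| edge-disjoint
  augmenting paths of M off M \<triangle> N; each has odd length \<ge> k and hence contains at least k/2
  edges of M - N, because k is even.  So (k/2) (|N| - |M|) \<le> |M|, which is the claim.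
*)
theory Submission
  imports Defs
begin

section \<open>Matchings in simple graphs\<close>

definition simple_graph :: "'a set set \<Rightarrow> bool" where
  "simple_graph G \<longleftrightarrow> (\<forall>e\<in>G. card e = 2)"

lemma is_matching_iff: "is_matching G M \<longleftrightarrow> M \<subseteq> G \<and> pairwise disjnt M"
  unfolding is_matching_def pairwise_def disjnt_def by blast

lemma disjnt_edges_eq:
  "pairwise disjnt M \<Longrightarrow> e \<in> M \<Longrightarrow> f \<in> M \<Longrightarrow> x \<in> e \<Longrightarrow> x \<in> f \<Longrightarrow> e = f"
  unfolding pairwise_def disjnt_def by blast

lemma simple_graph_subset: "simple_graph G \<Longrightarrow> H \<subseteq> G \<Longrightarrow> simple_graph H"
  unfolding simple_graph_def by blast

lemma simple_graph_finite_edge: "simple_graph G \<Longrightarrow> e \<in> G \<Longrightarrow> finite e"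
  unfolding simple_graph_def using card.infinite by fastforce

lemma simple_graph_edge:
  assumes "simple_graph G" "e \<in> G" "v \<in> e"
  obtains w where "e = {v, w}" "v \<noteq> w"
  using assms unfolding simple_graph_def card_2_iff by (metis insert_commute insertE singletonD)

lemma card_Union_matching:
  assumes "finite M" "simple_graph M" "pairwise disjnt M"
  shows "card (\<Union>M) = 2 * card M"
proof -
  have "finite (\<Union>M)" using assms(1,2) simple_graph_finite_edge by blast
  then show ?thesis
    using card_partition[of M 2] assms unfolding simple_graph_def pairwise_def disjnt_def by auto
qed

lemma card_Union_le: "simple_graph G \<Longrightarrow> card (\<Union>G) \<le> 2 * card G"
  using card_Union_le_sum_card[of G] unfolding simple_graph_def by simp

lemma Union_not_subset_smaller_matching:
  assumes "finite A" "finite B" "simple_graph (A \<union> B)" "pairwise disjnt B" "card A < card B"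
  shows "\<not> \<Union>B \<subseteq> \<Union>A"
proof
  assume "\<Union>B \<subseteq> \<Union>A"
  moreover have "finite (\<Union>A)" using assms(1,3) simple_graph_finite_edge by blast
  ultimately have "card (\<Union>B) \<le> card (\<Union>A)" by (rule card_mono[rotated])
  then show False
    using card_Union_matching[OF assms(2) simple_graph_subset[OF assms(3)] assms(4)]
      card_Union_le[OF simple_graph_subset[OF assms(3)], of A] assms(5) by auto
qed

lemma pairwise_disjnt_symdiff:
  assumes "pairwise disjnt X" "pairwise disjnt (Y - X)" "\<forall>e\<in>X. e \<inter> \<Union>Y \<noteq> {} \<longrightarrow> e \<in> Y"
  shows "pairwise disjnt (symdiff X Y)"
  using assms unfolding symdiff_def pairwise_def disjnt_def by blast

lemma card_symdiff:
  "finite X \<Longrightarrow> finite Y \<Longrightarrow> card (symdiff X Y) + card (X \<inter> Y) = card X + card (Y - X)"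
proof -
  assume "finite X" "finite Y"
  then have "card (symdiff X Y) = card (X - Y) + card (Y - X)"
    unfolding symdiff_def by (intro card_Un_disjoint) auto
  then show ?thesis using card_Int_Diff[OF \<open>finite X\<close>, of Y] by simp
qed

lemma card_disjoint_le_card_Un:
  assumes "finite X1" "finite X2" "X1 \<inter> X2 = {}" "X1 \<union> X2 \<subseteq> Y1 \<union> Y2" "finite Y1" "finite Y2"
  shows "card X1 + card X2 \<le> card Y1 + card Y2"
proof -
  have "card X1 + card X2 = card (X1 \<union> X2)" using assms(1-3) by (rule card_Un_disjoint[symmetric])
  also have "\<dots> \<le> card (Y1 \<union> Y2)" using assms(4-6) by (simp add: card_mono)
  also have "\<dots> \<le> card Y1 + card Y2" by (rule card_Un_le)
  finally show ?thesis .
qed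

section \<open>Edges of a path\<close>

lemma path_edge_inj:
  assumes "distinct ps" "Suc i < length ps" "Suc j < length ps" "path_edge ps i = path_edge ps j"
  shows "i = j"
proof -
  have "ps ! i \<in> {ps ! j, ps ! Suc j}" "ps ! Suc i \<in> {ps ! j, ps ! Suc j}"
    using assms(4) unfolding path_edge_def by auto
  then show ?thesis using assms(1-3) by (auto simp: nth_eq_iff_index_eq)
qed

lemma card_path_edge_image:
  "distinct ps \<Longrightarrow> I \<subseteq> {..< length ps - 1} \<Longrightarrow> card (path_edge ps ` I) = card I"
  by (intro card_image inj_onI path_edge_inj) auto

lemma path_edges_eq_image: "path_edges ps = path_edge ps ` {..< length ps - 1}"
  unfolding path_edges_def by auto

lemma finite_path_edges: "finite (path_edges ps)"
  unfolding path_edges_eq_image by simp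

lemma path_length_eq_card: "distinct ps \<Longrightarrow> path_length ps = card (path_edges ps)"
  unfolding path_edges_eq_image path_length_def by (simp add: card_path_edge_image)

lemma Union_path_edges_subset: "\<Union>(path_edges ps) \<subseteq> set ps"
  unfolding path_edges_def path_edge_def by auto

lemma set_subset_insert_hd: "ps \<noteq> [] \<Longrightarrow> set ps \<subseteq> insert (hd ps) (\<Union>(path_edges ps))"
proof
  fix x assume "ps \<noteq> []" "x \<in> set ps"
  then obtain i where "i < length ps" "x = ps ! i" by (auto simp: in_set_conv_nth)
  then show "x \<in> insert (hd ps) (\<Union>(path_edges ps))"
    unfolding path_edges_def path_edge_def
    by (cases i) (auto simp: hd_conv_nth \<open>ps \<noteq> []\<close>)
qed

lemma hd_in_first_edge: "2 \<le> length ps \<Longrightarrow> hd ps \<in> path_edge ps 0"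
  by (cases ps) (auto simp: path_edge_def)

lemma last_in_last_edge: "2 \<le> length ps \<Longrightarrow> last ps \<in> path_edge ps (length ps - 2)"
  by (cases ps rule: rev_cases) (auto simp: path_edge_def nth_append)

lemma even_length_ge_2: "even (length ps) \<Longrightarrow> ps \<noteq> [] \<Longrightarrow> 2 \<le> length ps"
  by (cases ps) (auto simp: odd_pos Suc_le_eq)

definition even_edges :: "'a list \<Rightarrow> 'a set set" where
  "even_edges ps = path_edge ps ` {i. Suc i < length ps \<and> even i}"

definition odd_edges :: "'a list \<Rightarrow> 'a set set" where
  "odd_edges ps = path_edge ps ` {i. Suc i < length ps \<and> odd i}"

lemma path_edges_even_odd: "path_edges ps = even_edges ps \<union> odd_edges ps"
  unfolding path_edges_def even_edges_def odd_edges_def by auto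

lemma even_indices_eq: "{i. Suc i < n \<and> even i} = (*) 2 ` {..< n div 2}"
  by (auto elim!: evenE)

lemma odd_indices_eq: "{i. Suc i < (n::nat) \<and> odd i} = (\<lambda>m. 2 * m + 1) ` {..< (n - 1) div 2}"
  by (auto elim!: oddE)

lemma card_even_edges: "distinct ps \<Longrightarrow> card (even_edges ps) = length ps div 2"
  unfolding even_edges_def
  by (subst card_path_edge_image) (auto simp: even_indices_eq card_image inj_on_def)

lemma card_odd_edges: "distinct ps \<Longrightarrow> card (odd_edges ps) = (length ps - 1) div 2"
  unfolding odd_edges_def
  by (subst card_path_edge_image) (auto simp: odd_indices_eq card_image inj_on_def)

lemma pairwise_disjnt_even_edges: "distinct ps \<Longrightarrow> pairwise disjnt (even_edges ps)"
  unfolding even_edges_def pairwise_def disjnt_def path_edge_def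
  by (auto simp: nth_eq_iff_index_eq)

lemma vertex_in_even_edge:
  assumes "even (length ps)" "x \<in> set ps"
  obtains e where "e \<in> even_edges ps" "x \<in> e"
proof -
  obtain i where i: "i < length ps" "x = ps ! i" using assms(2) by (auto simp: in_set_conv_nth)
  let ?j = "if even i then i else i - 1"
  have "Suc ?j < length ps"
    using i(1) assms(1) by (cases "even i") (presburger, simp)
  moreover have "even ?j" "x \<in> path_edge ps ?j"
    using i by (auto simp: path_edge_def elim: oddE)
  ultimately show ?thesis using that[of "path_edge ps ?j"] unfolding even_edges_def by blast
qed

lemma inner_vertex_in_odd_edge:
  assumes "x \<in> set ps" "x \<noteq> hd ps" "x \<noteq> last ps"
  obtains e where "e \<in> odd_edges ps" "x \<in> e"
proof -
  obtain i where i: "i < length ps" "x = ps ! i" using assms(1) by (auto simp: in_set_conv_nth)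
  have "i \<noteq> 0" using i assms(2) by (metis hd_conv_nth length_greater_0_conv less_nat_zero_code)
  moreover have "i \<noteq> length ps - 1" using i assms(3) last_conv_nth[of ps] by (cases "ps = []") auto
  ultimately have "0 < i" "Suc i < length ps" using i(1) by auto
  let ?j = "if odd i then i else i - 1"
  have "Suc ?j < length ps" "odd ?j" "x \<in> path_edge ps ?j"
    using i \<open>0 < i\<close> \<open>Suc i < length ps\<close> by (auto simp: path_edge_def)
  then show ?thesis using that[of "path_edge ps ?j"] unfolding odd_edges_def by blast
qed

lemma path_edge_Cons2: "path_edge (x # y # ps) (Suc (Suc i)) = path_edge ps i"
  by (simp add: path_edge_def)

lemma Suc_Suc_image_iff: "i \<in> (\<lambda>i. Suc (Suc i)) ` I \<longleftrightarrow> 2 \<le> i \<and> i - 2 \<in> I"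
  by (auto simp: image_iff intro!: bexI[of _ "i - 2"])

lemma even_edges_Cons2: "even_edges (x # y # ps) = insert {x, y} (even_edges ps)"
proof -
  have "{i. Suc i < length (x # y # ps) \<and> even i}
      = insert 0 ((\<lambda>i. Suc (Suc i)) ` {i. Suc i < length ps \<and> even i})"
    by (auto simp: Suc_Suc_image_iff; presburger)
  then show ?thesis
    unfolding even_edges_def by (simp add: image_image path_edge_Cons2) (simp add: path_edge_def)
qed

lemma odd_edges_Cons2:
  assumes "ps \<noteq> []"
  shows "odd_edges (x # y # ps) = insert {y, hd ps} (odd_edges ps)"
proof -
  have "{i. Suc i < length (x # y # ps) \<and> odd i}
      = insert 1 ((\<lambda>i. Suc (Suc i)) ` {i. Suc i < length ps \<and> odd i})"
    using assms by (auto simp: Suc_Suc_image_iff; presburger)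
  then show ?thesis unfolding odd_edges_def using assms
    by (simp add: image_image path_edge_Cons2) (simp add: path_edge_def hd_conv_nth)
qed

lemma path_edges_Cons2:
  "ps \<noteq> [] \<Longrightarrow> path_edges (x # y # ps) = insert {x, y} (insert {y, hd ps} (path_edges ps))"
  unfolding path_edges_even_odd by (auto simp: even_edges_Cons2 odd_edges_Cons2)

definition path_closed :: "'a set set \<Rightarrow> 'a list \<Rightarrow> bool" where
  "path_closed X ps \<longleftrightarrow> (\<forall>e\<in>X. e \<inter> set ps \<noteq> {} \<longrightarrow> e \<in> path_edges ps)"

lemma path_closed_Un: "path_closed (X \<union> Y) ps \<longleftrightarrow> path_closed X ps \<and> path_closed Y ps"
  unfolding path_closed_def by blast

lemma path_closed_Cons2:
  assumes "path_closed X ps" "ps \<noteq> []" "x \<notin> \<Union>X" "y \<notin> \<Union>X"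
  shows "path_closed (insert {x, y} (insert {y, hd ps} X)) (x # y # ps)"
  unfolding path_closed_def
proof (intro ballI impI)
  fix e assume e: "e \<in> insert {x, y} (insert {y, hd ps} X)" "e \<inter> set (x # y # ps) \<noteq> {}"
  have edges: "path_edges (x # y # ps) = insert {x, y} (insert {y, hd ps} (path_edges ps))"
    using path_edges_Cons2[OF assms(2)] .
  show "e \<in> path_edges (x # y # ps)"
  proof (cases "e \<in> X")
    case True
    then have "e \<inter> set ps \<noteq> {}" using e(2) assms(3,4) by auto
    then show ?thesis using assms(1) True edges unfolding path_closed_def by blast
  qed (use e(1) edges in auto)
qed

lemma path_closed_Union:
  "path_closed X ps \<Longrightarrow> e \<in> X \<Longrightarrow> e \<inter> \<Union>(path_edges ps) \<noteq> {} \<Longrightarrow> e \<in> path_edges ps"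
  unfolding path_closed_def using Union_path_edges_subset[of ps] by auto

section \<open>Alternating and augmenting paths\<close>

definition alternating :: "'a set set \<Rightarrow> 'a set set \<Rightarrow> 'a list \<Rightarrow> bool" where
  "alternating B A ps \<longleftrightarrow> distinct ps \<and> even_edges ps \<subseteq> B \<and> odd_edges ps \<subseteq> A"

lemma alternating_iff_nth:
  "alternating B A ps \<longleftrightarrow>
     distinct ps \<and> (\<forall>i. Suc i < length ps \<longrightarrow> path_edge ps i \<in> (if even i then B else A))"
  unfolding alternating_def even_edges_def odd_edges_def by auto

lemma alternating_mono: "alternating B A ps \<Longrightarrow> B \<subseteq> B' \<Longrightarrow> A \<subseteq> A' \<Longrightarrow> alternating B' A' ps"
  unfolding alternating_def by blast

lemma alternating_path_edges_subset: "alternating B A ps \<Longrightarrow> path_edges ps \<subseteq> B \<union> A"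
  unfolding alternating_def path_edges_even_odd by blast

lemma alternating_edges_Int:
  assumes "alternating B A ps" "A \<inter> B = {}"
  shows "path_edges ps \<inter> B = even_edges ps" "path_edges ps \<inter> A = odd_edges ps"
  using assms unfolding alternating_def path_edges_even_odd by blast+

lemma alternating_singleton: "alternating B A [v]"
  unfolding alternating_def even_edges_def odd_edges_def by simp

lemma alternating_pair: "x \<noteq> y \<Longrightarrow> {x, y} \<in> B \<Longrightarrow> alternating B A [x, y]"
  by (auto simp: alternating_iff_nth path_edge_def less_Suc_eq)

lemma alternating_Cons2:
  assumes "ps \<noteq> []" "x \<noteq> y" "x \<notin> set ps" "y \<notin> set ps" "{x, y} \<in> B" "{y, hd ps} \<in> A"
    "alternating B A ps"
  shows "alternating B A (x # y # ps)"
  using assms unfolding alternating_def by (simp add: even_edges_Cons2 odd_edges_Cons2)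

lemma alternating_exposed_last_even:
  assumes "alternating B A ps" "2 \<le> length ps" "exposed A (last ps)"
  shows "even (length ps)"
proof (rule ccontr)
  assume "odd (length ps)"
  then have "Suc (length ps - 2) < length ps" "odd (length ps - 2)"
    using assms(2) by presburger+
  then have "path_edge ps (length ps - 2) \<in> A"
    using assms(1) unfolding alternating_iff_nth by auto
  then show False using assms(3) last_in_last_edge[OF assms(2)] unfolding exposed_def by blast
qed

lemma alternating_odd_length_card_Diff:
  assumes "alternating B A ps" "A \<inter> B = {}" "odd (length ps)" "finite A" "card A < card B"
  shows "card (A - path_edges ps) < card (B - path_edges ps)"
proof -
  have "distinct ps" using assms(1) unfolding alternating_def by blast
  moreover have "length ps div 2 = (length ps - 1) div 2" using assms(3) by (auto elim: oddE)
  ultimately have "card (path_edges ps \<inter> A) = card (path_edges ps \<inter> B)"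
    using alternating_edges_Int[OF assms(1,2)] card_even_edges[of ps] card_odd_edges[of ps] by simp
  moreover have "card (path_edges ps \<inter> A) \<le> card A" using assms(4) by (simp add: card_mono)
  moreover have "finite B" using assms(5) by (intro card_ge_0_finite) linarith
  ultimately show ?thesis
    using assms(4,5) card_Diff_subset_Int[of A "path_edges ps"] card_Diff_subset_Int[of B "path_edges ps"]
    by (simp add: Int_commute)
qed

lemma augmenting_path_iff:
  "augmenting_path G M P \<longleftrightarrow>
     alternating (G - M) (G \<inter> M) P \<and> 2 \<le> length P \<and> exposed M (hd P) \<and> exposed M (last P)"
proof
  assume aug: "augmenting_path G M P"
  then have len: "2 \<le> length P" and hd: "exposed M (hd P)" and last: "exposed M (last P)"
    unfolding augmenting_path_def by auto
  have parity: "path_edge P i \<in> M \<longleftrightarrow> odd i" if "Suc i < length P" for i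
    using that
  proof (induction i)
    case 0
    then show ?case using hd hd_in_first_edge[OF len] unfolding exposed_def by auto
  next
    case (Suc i)
    then show ?case using aug unfolding augmenting_path_def by auto
  qed
  have "distinct P" "\<forall>i. Suc i < length P \<longrightarrow> path_edge P i \<in> G"
    using aug unfolding augmenting_path_def is_path_def by auto
  then have "alternating (G - M) (G \<inter> M) P"
    unfolding alternating_iff_nth using parity by auto
  then show "alternating (G - M) (G \<inter> M) P \<and> 2 \<le> length P \<and> exposed M (hd P) \<and> exposed M (last P)"
    using len hd last by blast
next
  assume "alternating (G - M) (G \<inter> M) P \<and> 2 \<le> length P \<and> exposed M (hd P) \<and> exposed M (last P)"
  then have alt: "distinct P" "\<And>i. Suc i < length P \<Longrightarrow> path_edge P i \<in> (if even i then G - M else G \<inter> M)"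
    and len: "2 \<le> length P" and ends: "exposed M (hd P)" "exposed M (last P)"
    unfolding alternating_iff_nth by auto
  have "hd P \<noteq> last P" using alt(1) len by (cases P) auto
  moreover have "path_edge P i \<in> G" if "Suc i < length P" for i
    using alt(2)[OF that] by (auto split: if_splits)
  then have "is_path G P" unfolding is_path_def using alt(1) len by auto
  moreover have "path_edge P i \<in> M \<longleftrightarrow> path_edge P (Suc i) \<notin> M" if "Suc (Suc i) < length P" for i
    using alt(2)[of i] alt(2)[of "Suc i"] that by (auto split: if_splits)
  ultimately show "augmenting_path G M P" unfolding augmenting_path_def using len ends by blast
qed

lemma augmenting_path_edges_subset: "augmenting_path G M P \<Longrightarrow> path_edges P \<subseteq> G"
  unfolding augmenting_path_def is_path_def path_edges_def by auto

lemma augmenting_path_length_card: "augmenting_path G M P \<Longrightarrow> path_length P = card (path_edges P)"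
  unfolding augmenting_path_def is_path_def by (simp add: path_length_eq_card)

lemma augmenting_path_even_length: "augmenting_path G M P \<Longrightarrow> even (length P)"
  unfolding augmenting_path_iff using alternating_exposed_last_even[of "G - M" "G \<inter> M" P]
  by (auto simp: exposed_def)

lemma augmenting_path_edges:
  assumes "augmenting_path G M P"
  shows "path_edges P \<inter> M = odd_edges P" "path_edges P - M = even_edges P"
proof -
  have "alternating (G - M) (G \<inter> M) P" using assms unfolding augmenting_path_iff by blast
  from alternating_edges_Int[OF this] show "path_edges P \<inter> M = odd_edges P" "path_edges P - M = even_edges P"
    using augmenting_path_edges_subset[OF assms] by blast+
qed

lemma augmenting_path_card_edges:
  assumes "augmenting_path G M P"
  shows "card (path_edges P - M) = card (path_edges P \<inter> M) + 1"
    and "path_length P = 2 * card (path_edges P \<inter> M) + 1"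
proof -
  have "distinct P" "2 \<le> length P" using assms unfolding augmenting_path_def is_path_def by auto
  moreover have "even (length P)" using augmenting_path_even_length[OF assms] .
  ultimately show "card (path_edges P - M) = card (path_edges P \<inter> M) + 1"
    and "path_length P = 2 * card (path_edges P \<inter> M) + 1"
    unfolding augmenting_path_edges[OF assms] path_length_def
    by (auto simp: card_even_edges card_odd_edges elim!: evenE)
qed

lemma augmenting_path_closed:
  assumes "pairwise disjnt M" "augmenting_path G M P"
  shows "path_closed M P"
  unfolding path_closed_def
proof (intro ballI impI)
  fix e assume "e \<in> M" "e \<inter> set P \<noteq> {}"
  then obtain x where x: "x \<in> e" "x \<in> set P" by blast
  have "exposed M (hd P)" "exposed M (last P)" using assms(2) unfolding augmenting_path_def by auto
  then have "x \<noteq> hd P" "x \<noteq> last P" using x(1) \<open>e \<in> M\<close> unfolding exposed_def by auto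
  then obtain h where h: "h \<in> odd_edges P" "x \<in> h" using inner_vertex_in_odd_edge x(2) by metis
  have "h \<in> M" "h \<in> path_edges P" using h(1) augmenting_path_edges(1)[OF assms(2)] by auto
  then show "e \<in> path_edges P" using disjnt_edges_eq[OF assms(1) \<open>e \<in> M\<close> \<open>h \<in> M\<close> x(1) h(2)] by simp
qed

lemma augment_matching:
  assumes "is_matching G M" "finite M" "augmenting_path G M P"
  shows "is_matching G (symdiff M (path_edges P))" "card (symdiff M (path_edges P)) = card M + 1"
proof -
  have M: "M \<subseteq> G" "pairwise disjnt M" using assms(1) unfolding is_matching_iff by blast+
  have "distinct P" using assms(3) unfolding augmenting_path_def is_path_def by blast
  then have "pairwise disjnt (path_edges P - M)"
    unfolding augmenting_path_edges(2)[OF assms(3)] by (rule pairwise_disjnt_even_edges)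
  then have "pairwise disjnt (symdiff M (path_edges P))"
    using pairwise_disjnt_symdiff M(2) path_closed_Union[OF augmenting_path_closed[OF M(2) assms(3)]]
    by blast
  moreover have "symdiff M (path_edges P) \<subseteq> G"
    using M(1) augmenting_path_edges_subset[OF assms(3)] unfolding symdiff_def by blast
  ultimately show "is_matching G (symdiff M (path_edges P))" unfolding is_matching_iff by blast
  show "card (symdiff M (path_edges P)) = card M + 1"
    using card_symdiff[OF assms(2) finite_path_edges, of P] augmenting_path_card_edges(1)[OF assms(3)]
    by (simp add: Int_commute)
qed

lemma augmenting_path_avoiding:
  assumes "augmenting_path G' M Q" "u \<notin> set Q" "\<forall>e\<in>G' - G. u \<in> e"
  shows "augmenting_path G M Q"
proof -
  have "path_edge Q i \<in> G" if "Suc i < length Q" for i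
  proof -
    have "path_edge Q i \<in> G'" using assms(1) that unfolding augmenting_path_def is_path_def by blast
    moreover have "u \<notin> path_edge Q i" using assms(2) that unfolding path_edge_def by auto
    ultimately show ?thesis using assms(3) by blast
  qed
  then show ?thesis using assms(1) unfolding augmenting_path_def is_path_def by blast
qed

section \<open>Augmenting paths in the symmetric difference of two matchings\<close>

lemma alternating_walk_Cons2:
  fixes A B :: "'a set set" and v v1 v2 :: 'a
  defines "a \<equiv> {v1, v2}" and "b \<equiv> {v, v1}"
  assumes A: "pairwise disjnt A" "a \<in> A" and B: "pairwise disjnt B" "b \<in> B"
    and v: "exposed A v" "v \<noteq> v1" "v1 \<noteq> v2"
    and alt: "alternating (B - {b}) (A - {a}) ps" "ps \<noteq> []" "hd ps = v2"
  shows "alternating B A (v # v1 # ps)"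
    and "even (length ps) \<Longrightarrow> exposed (A - {a}) (last ps) \<Longrightarrow> exposed A (last ps)"
    and "path_closed ((A - {a}) \<union> (B - {b})) ps \<Longrightarrow> path_closed (A \<union> B) (v # v1 # ps)"
proof -
  have "v \<noteq> v2" using v(1) A(2) unfolding exposed_def a_def by auto
  have "v \<notin> e" "v1 \<notin> e" if "e \<in> (A - {a}) \<union> (B - {b})" for e
    using that v(1) disjnt_edges_eq[OF A(1) _ A(2), of e v1]
      disjnt_edges_eq[OF B(1) _ B(2), of e v] disjnt_edges_eq[OF B(1) _ B(2), of e v1]
    unfolding exposed_def a_def b_def by auto
  then have fresh: "v \<notin> \<Union>((A - {a}) \<union> (B - {b}))" "v1 \<notin> \<Union>((A - {a}) \<union> (B - {b}))"
    by auto
  have "set ps \<subseteq> insert v2 (\<Union>(path_edges ps))"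
    using set_subset_insert_hd[OF alt(2)] alt(3) by simp
  also have "\<dots> \<subseteq> insert v2 (\<Union>((A - {a}) \<union> (B - {b})))"
    using alternating_path_edges_subset[OF alt(1)] by blast
  finally have notin: "v \<notin> set ps" "v1 \<notin> set ps"
    using fresh \<open>v \<noteq> v2\<close> v(3) by auto
  show "alternating B A (v # v1 # ps)"
    using alternating_Cons2[OF alt(2) v(2) notin] alternating_mono[OF alt(1)] A(2) B(2) alt(3)
    unfolding a_def b_def by blast
  show "exposed A (last ps)" if "even (length ps)" "exposed (A - {a}) (last ps)"
  proof -
    have "2 \<le> length ps" using even_length_ge_2 that(1) alt(2) .
    then have "last ps \<noteq> v2"
      using alt(1,3) unfolding alternating_def by (cases ps) auto
    then have "last ps \<notin> a" using notin(2) last_in_set[OF alt(2)] unfolding a_def by auto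
    then show ?thesis using that(2) unfolding exposed_def by blast
  qed
  show "path_closed (A \<union> B) (v # v1 # ps)" if "path_closed ((A - {a}) \<union> (B - {b})) ps"
    using path_closed_Cons2[OF that alt(2) fresh] alt(3) unfolding path_closed_def a_def b_def
    by blast
qed

(* Since A and B are matchings, the walk from v along edges of B, A, B, ... is forced.  It
   stops either after a B-edge at an A-exposed vertex, or at a B-exposed vertex reached by an
   A-edge (possibly v itself); in the latter case it has traversed a whole component of A \<union> B. *)
lemma alternating_walk:
  assumes "finite B" "pairwise disjnt A" "pairwise disjnt B" "simple_graph (A \<union> B)" "exposed A v"
  shows "\<exists>ps. alternating B A ps \<and> ps \<noteq> [] \<and> hd ps = v \<and>
    (even (length ps) \<and> exposed A (last ps) \<or> odd (length ps) \<and> path_closed (A \<union> B) ps)"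
  using assms
proof (induction "card B" arbitrary: A B v rule: less_induct)
  case less
  show ?case
  proof (cases "exposed B v")
    case True
    then have "path_closed (A \<union> B) [v]"
      using less.prems(5) unfolding path_closed_def exposed_def by auto
    then show ?thesis using alternating_singleton by fastforce
  next
    case False
    then obtain b where b: "b \<in> B" "v \<in> b" unfolding exposed_def by blast
    then obtain v1 where v1: "b = {v, v1}" "v \<noteq> v1"
      using simple_graph_edge[OF less.prems(4)] by blast
    show ?thesis
    proof (cases "exposed A v1")
      case True
      then show ?thesis
        using alternating_pair[OF v1(2)] b v1 by (intro exI[of _ "[v, v1]"]) auto
    next
      case False
      then obtain a where a: "a \<in> A" "v1 \<in> a" unfolding exposed_def by blast
      then obtain v2 where v2: "a = {v1, v2}" "v1 \<noteq> v2"
        using simple_graph_edge[OF less.prems(4)] by blast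
      have "exposed (A - {a}) v2"
        using disjnt_edges_eq[OF less.prems(2) _ a(1)] v2(1) unfolding exposed_def by blast
      moreover have "card (B - {b}) < card B" using card_Diff1_less[OF less.prems(1) b(1)] .
      ultimately obtain ps where ps: "alternating (B - {b}) (A - {a}) ps" "ps \<noteq> []" "hd ps = v2"
        "even (length ps) \<and> exposed (A - {a}) (last ps) \<or>
         odd (length ps) \<and> path_closed ((A - {a}) \<union> (B - {b})) ps"
        using less.hyps[of "B - {b}" "A - {a}" v2] less.prems(1-4)
        by (auto intro: pairwise_subset simple_graph_subset)
      note walk = alternating_walk_Cons2[OF less.prems(2) a(1)[unfolded v2(1)] less.prems(3)
          b(1)[unfolded v1(1)] less.prems(5) v1(2) v2(2) ps(1-3)[unfolded v1(1) v2(1)]]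
      show ?thesis
        using walk ps(2) ps(4)[unfolded v1(1) v2(1)] by (intro exI[of _ "v # v1 # ps"]) auto
    qed
  qed
qed

lemma exposed_outside_closed_path:
  assumes "path_closed (A \<union> B) ps" "alternating (B - path_edges ps) A' qs" "even (length qs)"
    "x \<in> set qs" "exposed (A - path_edges ps) x"
  shows "exposed A x"
  unfolding exposed_def
proof (intro ballI notI)
  obtain g where g: "g \<in> even_edges qs" "x \<in> g" using vertex_in_even_edge assms(3,4) by metis
  then have "g \<in> B - path_edges ps" using assms(2) unfolding alternating_def by blast
  fix e assume "e \<in> A" "x \<in> e"
  then have "e \<in> path_edges ps" using assms(5) unfolding exposed_def by blast
  then have "x \<in> set ps" using \<open>x \<in> e\<close> Union_path_edges_subset[of ps] by auto
  then have "g \<in> path_edges ps" using assms(1) g(2) \<open>g \<in> B - path_edges ps\<close>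
    unfolding path_closed_def by auto
  then show False using \<open>g \<in> B - path_edges ps\<close> by blast
qed

(* Some vertex is covered by B but not by A.  If the walk from it is not augmenting, it is a
   whole component of A \<union> B with as many edges in A as in B: delete it and recurse. *)
lemma alternating_path_of_disjoint_matchings:
  assumes "finite A" "finite B" "pairwise disjnt A" "pairwise disjnt B" "A \<inter> B = {}"
    "simple_graph (A \<union> B)" "card A < card B"
  shows "\<exists>ps. alternating B A ps \<and> 2 \<le> length ps \<and> exposed A (hd ps) \<and> exposed A (last ps)"
  using assms
proof (induction "card B" arbitrary: A B rule: less_induct)
  case less
  obtain v where v: "v \<in> \<Union>B" "v \<notin> \<Union>A"
    using Union_not_subset_smaller_matching[OF less.prems(1,2,6,4,7)] by blast
  then have "exposed A v" unfolding exposed_def by blast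
  then obtain ps where ps: "alternating B A ps" "ps \<noteq> []" "hd ps = v"
    "even (length ps) \<and> exposed A (last ps) \<or> odd (length ps) \<and> path_closed (A \<union> B) ps"
    using alternating_walk[OF less.prems(2,3,4,6)] by blast
  show ?case
  proof (cases "even (length ps)")
    case True
    then show ?thesis using ps even_length_ge_2 \<open>exposed A v\<close> by blast
  next
    case False
    then have closed: "path_closed (A \<union> B) ps" using ps(4) by blast
    define A' B' where "A' = A - path_edges ps" and "B' = B - path_edges ps"
    obtain b where "b \<in> B" "v \<in> b" using v(1) by blast
    then have "b \<inter> set ps \<noteq> {}" using ps(3) hd_in_set[OF ps(2)] by blast
    then have "b \<in> B - B'" using closed \<open>b \<in> B\<close> unfolding path_closed_def B'_def by blast
    then have B': "card B' < card B" using less.prems(2) unfolding B'_def by (intro psubset_card_mono) auto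
    have A'B': "card A' < card B'"
      using alternating_odd_length_card_Diff[OF ps(1) less.prems(5) False less.prems(1,7)]
      unfolding A'_def B'_def .
    have fin: "finite A'" "finite B'" and disj: "A' \<inter> B' = {}"
      using less.prems(1,2,5) unfolding A'_def B'_def by auto
    have matchings: "pairwise disjnt A'" "pairwise disjnt B'"
      using pairwise_subset[OF less.prems(3)] pairwise_subset[OF less.prems(4)]
      unfolding A'_def B'_def by auto
    have simple: "simple_graph (A' \<union> B')"
      using simple_graph_subset[OF less.prems(6)] unfolding A'_def B'_def by (meson Diff_subset Un_mono)
    obtain qs where qs: "alternating B' A' qs" "2 \<le> length qs"
      "exposed A' (hd qs)" "exposed A' (last qs)"
      using less.hyps[OF B' fin matchings disj simple A'B'] by blast
    have "qs \<noteq> []" using qs(2) by auto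
    moreover have "exposed A x" if "x \<in> set qs" "exposed A' x" for x
      using exposed_outside_closed_path[OF closed qs(1)[unfolded B'_def]
          alternating_exposed_last_even[OF qs(1,2,4)]] that
      unfolding A'_def by blast
    moreover have "B' \<subseteq> B" "A' \<subseteq> A" unfolding A'_def B'_def by auto
    ultimately show ?thesis
      using alternating_mono[OF qs(1)] qs by (metis hd_in_set last_in_set)
  qed
qed

lemma augmenting_path_in_symdiff:
  assumes "finite G" "simple_graph G" "is_matching G M" "is_matching G N" "card M < card N"
  obtains P where "augmenting_path G M P" "path_edges P \<subseteq> symdiff M N" "path_closed (M \<union> N) P"
proof -
  have M: "M \<subseteq> G" "pairwise disjnt M" and N: "N \<subseteq> G" "pairwise disjnt N"
    using assms(3,4) unfolding is_matching_iff by blast+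
  have fin: "finite M" "finite N" using M(1) N(1) assms(1) finite_subset by blast+
  have "card (M - N) < card (N - M)"
    using card_Int_Diff[OF fin(1), of N] card_Int_Diff[OF fin(2), of M] assms(5) by (simp add: Int_commute)
  moreover have "simple_graph ((M - N) \<union> (N - M))"
    using simple_graph_subset[OF assms(2)] M(1) N(1) by (meson Diff_subset Un_least subset_trans)
  ultimately obtain P where P: "alternating (N - M) (M - N) P" "2 \<le> length P"
    "exposed (M - N) (hd P)" "exposed (M - N) (last P)"
    using alternating_path_of_disjoint_matchings[of "M - N" "N - M"] fin
      pairwise_subset[OF M(2), of "M - N"] pairwise_subset[OF N(2), of "N - M"] by auto
  have "even (length P)" using alternating_exposed_last_even[OF P(1,2,4)] .
  have cover: "\<exists>g\<in>N \<inter> path_edges P - M. x \<in> g" if x: "x \<in> set P" for x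
  proof -
    obtain g where "g \<in> even_edges P" "x \<in> g"
      using vertex_in_even_edge[OF \<open>even (length P)\<close> x] by metis
    then show ?thesis using P(1) path_edges_even_odd unfolding alternating_def by blast
  qed
  have N_edge: "e \<in> N \<inter> path_edges P - M" if "e \<in> N" "x \<in> e" "x \<in> set P" for e x
    using cover[OF that(3)] disjnt_edges_eq[OF N(2) that(1) _ that(2)] by blast
  have lift: "exposed M x" if "exposed (M - N) x" "x \<in> set P" for x
    using that N_edge unfolding exposed_def by blast
  have "P \<noteq> []" using P(2) by auto
  then have "exposed M (hd P)" "exposed M (last P)"
    using lift P(3,4) hd_in_set last_in_set by blast+
  moreover have "N - M \<subseteq> G - M" "M - N \<subseteq> G \<inter> M" using M(1) N(1) by auto
  then have "alternating (G - M) (G \<inter> M) P" by (rule alternating_mono[OF P(1)])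
  ultimately have aug: "augmenting_path G M P" using P(2) by (simp add: augmenting_path_iff)
  have "path_closed N P" unfolding path_closed_def using N_edge by blast
  then have "path_closed (M \<union> N) P"
    using augmenting_path_closed[OF M(2) aug] unfolding path_closed_Un by blast
  moreover have "path_edges P \<subseteq> symdiff M N"
    using alternating_path_edges_subset[OF P(1)] unfolding symdiff_def by blast
  ultimately show ?thesis using that aug by blast
qed

lemma remove_augmenting_path:
  assumes "is_matching G M" "is_matching G N" "finite N" "augmenting_path G M P"
    "path_edges P \<subseteq> symdiff M N" "path_closed N P"
  shows "is_matching G (symdiff N (path_edges P))" "card (symdiff N (path_edges P)) + 1 = card N"
proof -
  have M: "M \<subseteq> G" "pairwise disjnt M" and N: "N \<subseteq> G" "pairwise disjnt N"
    using assms(1,2) unfolding is_matching_iff by blast+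
  have "path_edges P - N \<subseteq> M" using assms(5) unfolding symdiff_def by blast
  then have "pairwise disjnt (symdiff N (path_edges P))"
    using pairwise_disjnt_symdiff[OF N(2) pairwise_subset[OF M(2)]] path_closed_Union[OF assms(6)]
    by blast
  moreover have "symdiff N (path_edges P) \<subseteq> G"
    using N(1) augmenting_path_edges_subset[OF assms(4)] unfolding symdiff_def by blast
  ultimately show "is_matching G (symdiff N (path_edges P))" unfolding is_matching_iff by blast
  have "N \<inter> path_edges P = path_edges P - M" "path_edges P - N = path_edges P \<inter> M"
    using assms(5) unfolding symdiff_def by blast+
  then show "card (symdiff N (path_edges P)) + 1 = card N"
    using card_symdiff[OF assms(3) finite_path_edges, of P] augmenting_path_card_edges(1)[OF assms(4)]
    by simp
qed

lemma two_disjoint_augmenting_paths: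
  assumes "finite G" "simple_graph G" "is_matching G M" "is_matching G N" "card M + 2 \<le> card N"
  obtains P1 P2 where "augmenting_path G M P1" "augmenting_path G M P2"
    "path_edges P1 \<inter> path_edges P2 = {}" "path_edges P1 \<union> path_edges P2 \<subseteq> symdiff M N"
    "set P1 \<inter> set P2 = {}"
proof -
  have fin: "finite N" using assms(4) rev_finite_subset[OF assms(1)] unfolding is_matching_def by auto
  obtain P1 where P1: "augmenting_path G M P1" "path_edges P1 \<subseteq> symdiff M N"
    "path_closed (M \<union> N) P1"
    using augmenting_path_in_symdiff[OF assms(1-4)] assms(5) by auto
  define N1 where "N1 = symdiff N (path_edges P1)"
  have "path_closed N P1" using P1(3) unfolding path_closed_Un by blast
  then have N1: "is_matching G N1" "card N1 + 1 = card N"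
    using remove_augmenting_path[OF assms(3,4) fin P1(1,2)] unfolding N1_def by blast+
  moreover have "card M < card N1" using N1(2) assms(5) by linarith
  ultimately obtain P2 where P2: "augmenting_path G M P2" "path_edges P2 \<subseteq> symdiff M N1"
    using augmenting_path_in_symdiff[OF assms(1-3)] by metis
  have P2_edges: "path_edges P2 \<subseteq> symdiff M N - path_edges P1"
    using P2(2) P1(2) unfolding N1_def symdiff_def by blast
  have "x \<notin> set P1" if x: "x \<in> set P2" for x
  proof
    assume "x \<in> set P1"
    obtain e where "e \<in> even_edges P2" "x \<in> e"
      using vertex_in_even_edge[OF augmenting_path_even_length[OF P2(1)] x] by metis
    then have "e \<in> M \<union> N" "e \<notin> path_edges P1" "x \<in> e"
      using P2_edges path_edges_even_odd[of P2] unfolding symdiff_def by blast+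
    then show False using P1(3) \<open>x \<in> set P1\<close> unfolding path_closed_def by blast
  qed
  then show ?thesis using that P1(1,2) P2(1) P2_edges by blast
qed

section \<open>Matchings without short augmenting paths\<close>

definition no_short_augmenting_path :: "nat \<Rightarrow> 'a set set \<Rightarrow> 'a set set \<Rightarrow> bool" where
  "no_short_augmenting_path k G M \<longleftrightarrow> (\<forall>P. augmenting_path G M P \<longrightarrow> k \<le> path_length P)"

lemma matching_deficiency:
  assumes "finite G" "simple_graph G" "is_matching G M" "is_matching G N"
    "no_short_augmenting_path (2 * j) G M"
  shows "j * card N \<le> j * card M + card (M - N)"
  using assms(4)
proof (induction "card N" arbitrary: N rule: less_induct)
  case less
  show ?case
  proof (cases "card M < card N")
    case False
    then show ?thesis by (simp add: trans_le_add1)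
  next
    case True
    have fin: "finite M" "finite N"
      using assms(3) less.prems rev_finite_subset[OF assms(1)] unfolding is_matching_def by auto
    obtain P where P: "augmenting_path G M P" "path_edges P \<subseteq> symdiff M N" "path_closed (M \<union> N) P"
      using augmenting_path_in_symdiff[OF assms(1,2,3) less.prems True] by blast
    define N' where "N' = symdiff N (path_edges P)"
    have "path_closed N P" using P(3) unfolding path_closed_Un by blast
    then have N': "is_matching G N'" "card N' + 1 = card N"
      using remove_augmenting_path[OF assms(3) less.prems fin(2) P(1,2)] unfolding N'_def by blast+
    then have IH: "j * card N' \<le> j * card M + card (M - N')"
      using less.hyps[of N'] by simp
    have "2 * j \<le> path_length P"
      using assms(5) P(1) unfolding no_short_augmenting_path_def by blast
    then have "j \<le> card (path_edges P \<inter> M)"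
      unfolding augmenting_path_card_edges(2)[OF P(1)] by simp
    moreover have "M - N' = (M - N) - (path_edges P \<inter> M)" "path_edges P \<inter> M \<subseteq> M - N"
      using P(2) unfolding N'_def symdiff_def by blast+
    then have "card (M - N') + card (path_edges P \<inter> M) = card (M - N)"
      using fin(1) by (simp add: card_Diff_subset finite_subset card_mono)
    moreover have "j * card N = j * card N' + j" using N'(2)[symmetric] by (simp add: algebra_simps)
    ultimately show ?thesis using IH by linarith
  qed
qed

lemma shortest_augmentation_keeps_paths_long:
  assumes "finite G" "simple_graph G" "is_matching G M"
    and avoid: "\<forall>Q. augmenting_path G M Q \<and> u \<notin> set Q \<longrightarrow> k \<le> path_length Q"
    and P: "augmenting_path G M P" "u \<in> set P"
      "\<forall>Q. augmenting_path G M Q \<and> u \<in> set Q \<longrightarrow> path_length P \<le> path_length Q"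
      "path_length P < k"
  shows "no_short_augmenting_path k G (symdiff M (path_edges P))"
  unfolding no_short_augmenting_path_def
proof (intro allI impI)
  fix Q
  define M' where "M' = symdiff M (path_edges P)"
  assume Q: "augmenting_path G M' Q"
  show "k \<le> path_length Q"
  proof (rule ccontr)
    assume "\<not> k \<le> path_length Q"
    have fin: "finite M" using assms(3) rev_finite_subset[OF assms(1)] unfolding is_matching_def by auto
    have M': "is_matching G M'" "card M' = card M + 1"
      using augment_matching[OF assms(3) fin P(1)] unfolding M'_def by blast+
    define N where "N = symdiff M' (path_edges Q)"
    have "finite M'" using M'(1) rev_finite_subset[OF assms(1)] unfolding is_matching_def by auto
    then have N: "is_matching G N" "card N = card M + 2"
      using augment_matching[OF M'(1) _ Q] M'(2) unfolding N_def by auto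
    obtain P1 P2 where P12: "augmenting_path G M P1" "augmenting_path G M P2"
      "path_edges P1 \<inter> path_edges P2 = {}" "path_edges P1 \<union> path_edges P2 \<subseteq> symdiff M N"
      "set P1 \<inter> set P2 = {}"
      using two_disjoint_augmenting_paths[OF assms(1-3) N(1)] N(2) by auto
    have "path_edges P1 \<union> path_edges P2 \<subseteq> path_edges P \<union> path_edges Q"
      using P12(4) unfolding N_def M'_def symdiff_def by blast
    then have sum: "path_length P1 + path_length P2 \<le> path_length P + path_length Q"
      unfolding augmenting_path_length_card[OF P12(1)] augmenting_path_length_card[OF P12(2)]
        augmenting_path_length_card[OF P(1)] augmenting_path_length_card[OF Q]
      by (rule card_disjoint_le_card_Un[OF finite_path_edges finite_path_edges P12(3) _
            finite_path_edges finite_path_edges])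
    have lower: "(if u \<in> set R then path_length P else k) \<le> path_length R"
      if "augmenting_path G M R" for R
      using that avoid P(3) by auto
    show False
      using sum lower[OF P12(1)] lower[OF P12(2)] P12(5) P(4) \<open>\<not> k \<le> path_length Q\<close>
      by (auto split: if_splits)
  qed
qed

section \<open>The online algorithm\<close>

lemma alg_step_invariant:
  assumes "finite G'" "simple_graph G'" "G \<subseteq> G'" "\<forall>e\<in>G' - G. u \<in> e"
    and "is_matching G M" "no_short_augmenting_path k G M" and "alg_step k G' u M M'"
  shows "is_matching G' M' \<and> no_short_augmenting_path k G' M'"
proof -
  have M: "is_matching G' M" using assms(3,5) unfolding is_matching_def by blast
  have avoid: "k \<le> path_length Q" if "augmenting_path G' M Q" "u \<notin> set Q" for Q
    using assms(6) augmenting_path_avoiding[OF that assms(4)]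
    unfolding no_short_augmenting_path_def by blast
  consider (keep) "\<not> (\<exists>P. augmenting_path G' M P \<and> u \<in> set P \<and> path_length P \<le> k - 1)" "M' = M"
    | (augment) P where "augmenting_path G' M P" "u \<in> set P"
        "\<forall>Q. augmenting_path G' M Q \<and> u \<in> set Q \<longrightarrow> path_length P \<le> path_length Q"
        "path_length P \<le> k - 1" "M' = symdiff M (path_edges P)"
    using assms(7) unfolding alg_step_def by blast
  then show ?thesis
  proof cases
    case keep
    then show ?thesis using M avoid unfolding no_short_augmenting_path_def by fastforce
  next
    case augment
    have "0 < path_length P"
      using augment(1) unfolding augmenting_path_def path_length_def by auto
    then have "path_length P < k" using augment(4) by linarith
    moreover have "finite M" using M rev_finite_subset[OF assms(1)] unfolding is_matching_def by auto
    ultimately show ?thesis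
      using augment_matching(1)[OF M _ augment(1)] avoid augment
        shortest_augmentation_keeps_paths_long[OF assms(1,2) M _ augment(1-3)]
      by blast
  qed
qed

lemma bip_instance_simple_graph:
  assumes "bip_instance Ls R E"
  shows "finite E" "simple_graph E"
proof -
  have "E \<subseteq> (\<lambda>(l, r). {l, r}) ` (set Ls \<times> R)"
    using assms unfolding bip_instance_def by fastforce
  moreover have "finite (set Ls \<times> R)" using assms unfolding bip_instance_def by simp
  ultimately show "finite E" by (metis finite_surj)
  show "simple_graph E"
    using assms unfolding bip_instance_def simple_graph_def by (fastforce simp: card_2_iff)
qed

lemma revealed_simple_graph:
  assumes "bip_instance Ls R E"
  shows "finite (revealed Ls E t)" "simple_graph (revealed Ls E t)"
proof -
  have "revealed Ls E t \<subseteq> E" unfolding revealed_def by blast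
  then show "finite (revealed Ls E t)" "simple_graph (revealed Ls E t)"
    using bip_instance_simple_graph[OF assms] rev_finite_subset simple_graph_subset by blast+
qed

lemma revealed_Suc:
  assumes "t < length Ls"
  shows "revealed Ls E t \<subseteq> revealed Ls E (Suc t)"
    and "\<forall>e\<in>revealed Ls E (Suc t) - revealed Ls E t. Ls ! t \<in> e"
  using assms unfolding revealed_def by (auto simp: take_Suc_conv_app_nth)

lemma alg_run_invariant:
  assumes "bip_instance Ls R E" "alg_run k Ls E Ms" "t \<le> length Ls"
  shows "is_matching (revealed Ls E t) (Ms t) \<and> no_short_augmenting_path k (revealed Ls E t) (Ms t)"
  using assms(3)
proof (induction t)
  case 0
  have "\<not> augmenting_path {} M P" for M :: "'a set set" and P
  proof
    assume P: "augmenting_path {} M P"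
    then have "path_edges P = {}" using augmenting_path_edges_subset by blast
    then show False using augmenting_path_length_card[OF P] augmenting_path_card_edges(2)[OF P] by simp
  qed
  then show ?case
    using assms(2) unfolding alg_run_def revealed_def is_matching_def no_short_augmenting_path_def
    by auto
next
  case (Suc t)
  then have "t < length Ls" by simp
  note G = revealed_simple_graph[OF assms(1), of "Suc t"]
  have IH: "is_matching (revealed Ls E t) (Ms t)" "no_short_augmenting_path k (revealed Ls E t) (Ms t)"
    using Suc by auto
  have "alg_step k (revealed Ls E (Suc t)) (Ls ! t) (Ms t) (Ms (Suc t))"
    using assms(2) \<open>t < length Ls\<close> unfolding alg_run_def by blast
  then show ?case by (rule alg_step_invariant[OF G revealed_Suc[OF \<open>t < length Ls\<close>] IH])
qed

lemma OPT_attained: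
  assumes "finite G"
  obtains N where "is_matching G N" "card N = OPT G"
proof -
  have "{card M | M. is_matching G M} \<subseteq> card ` Pow G" unfolding is_matching_def by auto
  then have "finite {card M | M. is_matching G M}" by (rule finite_subset) (simp add: assms)
  moreover have "{card M | M. is_matching G M} \<noteq> {}" unfolding is_matching_def by auto
  ultimately have "OPT G \<in> {card M | M. is_matching G M}" unfolding OPT_def by (rule Max_in)
  then show ?thesis using that by auto
qed

theorem theorem1:
  fixes k :: nat and Ls :: "'a list" and R :: "'a set" and E :: "'a set set"
    and Ms :: "nat \<Rightarrow> 'a set set"
  assumes "even k" and "k \<ge> 2"
    and "bip_instance Ls R E"
    and "alg_run k Ls E Ms"
    and "t \<le> length Ls"
  shows "real (card (Ms t)) \<ge> (1 - 2 / (real k + 2)) * real (OPT (revealed Ls E t))"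
proof -
  define G where "G = revealed Ls E t"
  obtain j where k: "k = 2 * j" using assms(1) by blast
  have G: "finite G" "simple_graph G" using revealed_simple_graph[OF assms(3)] unfolding G_def by blast+
  have M: "is_matching G (Ms t)" "no_short_augmenting_path (2 * j) G (Ms t)"
    using alg_run_invariant[OF assms(3-5)] k unfolding G_def by auto
  obtain N where N: "is_matching G N" "card N = OPT G" using OPT_attained[OF G(1)] by blast
  have "j * card N \<le> j * card (Ms t) + card (Ms t - N)"
    using matching_deficiency[OF G M(1) N(1) M(2)] .
  also have "\<dots> \<le> (j + 1) * card (Ms t)"
  proof -
    have "finite (Ms t)" using M(1) G(1) finite_subset unfolding is_matching_def by auto
    then show ?thesis by (simp add: card_mono)
  qed
  finally have "real (j * card N) \<le> real ((j + 1) * card (Ms t))" by (simp only: of_nat_le_iff)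
  then have le: "real j * card N \<le> (real j + 1) * card (Ms t)" by (simp add: algebra_simps)
  have "(1 - 2 / (real k + 2)) * OPT (revealed Ls E t) = real j * card N / (real j + 1)"
    using k N(2) unfolding G_def by (simp add: field_simps)
  also have "\<dots> \<le> card (Ms t)" using le by (simp add: divide_le_eq algebra_simps)
  finally show ?thesis .
qed

end
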